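(* Let $\mathrm U\ge0$, $h_b\in[0,1/2]$ and $k\in\mathbb T^2$. If $\lambda\in\rho(A_{1,1}(\mathrm U,k))$ is an eigenvalue of $A(\mathrm U,k)$, then its eigenspace is $\mathbb C\,g(k,\lambda)$, where $$g(k,\lambda):=\big(\hat\upsilon(k)(A_{1,1}(\mathrm U,k)-\lambda\mathfrak 1)^{-1}\mathfrak d(k),\,-1\big)\in\mathcal H.$$ In particular $\lambda$ is a non-degenerate eigenvalue of $A(\mathrm U,k)$.
   Context: Notation: $\mathbb T^2=[-\pi,\pi)^2$ with normalized Haar measure $\nu$; $L^2(\mathbb T^2)=L^2(\mathbb T^2,\nu)$, scalar product antilinear in the first argument. For $f\in\ell^1(\mathbb Z^2)$, $\hat f(k)=\sum_{x}e^{ik\cdot x}f(x)$, $k\in\mathbb R^2$. $\hat{\mathfrak e}_x(p)=e^{ip\cdot x}$; $P_x$ the orthogonal projection onto $\mathbb C\hat{\mathfrak e}_x$; $M_g$ multiplication by $g$; $\cos(q):=\cos q_1+\cos q_2$; $\rho(\cdot)$ denotes the resolvent set. Data: $\epsilon,h_b,\mathrm U\ge0$; $\mathrm u:\mathbb Z^2\to[0,\infty)$, $\upsilon,\mathfrak p_1,\mathfrak p_2:\mathbb Z^2\to\mathbb R$, all invariant under $90^\circ$-rotations, $\mathrm u,\upsilon$ absolutely summable, $\sum_z e^{\alpha_0|z|}|\mathfrak p_j(z)|<\infty$ for some $\alpha_0>0$, $\mathfrak p_2(z)=0$ for $z\notin(2\mathbb Z)^2$, $\mathfrak p_1+\mathfrak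 p_2\neq0$, and for every $k$ some $x$ with $\mathfrak p_2(x)\neq-e^{ik\cdot x/2}\mathfrak p_1(x)$. For $k,p\in\mathbb T^2$: $\mathfrak b(k)=h_b\epsilon(2-\cos k)$, $\mathfrak f(k)(p)=\epsilon(4-\cos(p+k)-\cos p)$, $\mathfrak d(k)(p)=\hat{\mathfrak p}_1(k+p)+\hat{\mathfrak p}_2(k/2+p)$. $A_{1,1}(\mathrm U,k)=M_{\mathfrak f(k)}+\sum_x\mathrm u(x)P_x+\mathrm UP_0$; on $\mathcal H=L^2(\mathbb T^2)\oplus\mathbb C$, $A(\mathrm U,k)(\varphi,z)=\big(A_{1,1}(\mathrm U,k)\varphi+\hat\upsilon(k)z\,\mathfrak d(k),\ \hat\upsilon(k)\langle\mathfrak d(k),\varphi\rangle+\mathfrak b(k)z\big)$. *)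

theory Defs
  imports "HOL-Analysis.Analysis"
begin

type_synonym zvec = "int \<times> int"
type_synonym rvec = "real \<times> real"

text \<open>The torus [-pi,pi)^2 as a subset of R^2 (functions on T^2 are functions on R^2,
  only their values on this box matter).\<close>
definition Tbox :: "rvec set" where
  "Tbox = {-pi..<pi} \<times> {-pi..<pi}"

definition zdot :: "rvec \<Rightarrow> zvec \<Rightarrow> real" where
  "zdot k x = fst k * of_int (fst x) + snd k * of_int (snd x)"

definition znorm :: "zvec \<Rightarrow> real" where
  "znorm z = sqrt (of_int (fst z)^2 + of_int (snd z)^2)"

definition rot90 :: "zvec \<Rightarrow> zvec" where
  "rot90 z = (- snd z, fst z)"

definition rot_inv :: "(zvec \<Rightarrow> real) \<Rightarrow> bool" where
  "rot_inv f \<longleftrightarrow> (\<forall>x. f (rot90 x) = f x)"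

definition fhat :: "(zvec \<Rightarrow> real) \<Rightarrow> rvec \<Rightarrow> complex" where
  "fhat f k = (\<Sum>\<^sub>\<infinity>x. cis (zdot k x) * complex_of_real (f x))"

definition cos2 :: "rvec \<Rightarrow> real" where
  "cos2 q = cos (fst q) + cos (snd q)"

definition L2T :: "(rvec \<Rightarrow> complex) \<Rightarrow> bool" where
  "L2T \<phi> \<longleftrightarrow> \<phi> \<in> borel_measurable lborel \<and>
     set_integrable lborel Tbox (\<lambda>p. (cmod (\<phi> p))^2)"

definition innerT :: "(rvec \<Rightarrow> complex) \<Rightarrow> (rvec \<Rightarrow> complex) \<Rightarrow> complex" where
  "innerT f g = complex_of_real (1 / (4 * pi^2)) * (LINT p:Tbox|lborel. cnj (f p) * g p)"

definition normsqT :: "(rvec \<Rightarrow> complex) \<Rightarrow> real" where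
  "normsqT f = (1 / (4 * pi^2)) * (LINT p:Tbox|lborel. (cmod (f p))^2)"

definition eqT :: "(rvec \<Rightarrow> complex) \<Rightarrow> (rvec \<Rightarrow> complex) \<Rightarrow> bool" where
  "eqT f g \<longleftrightarrow> (AE p in lborel. p \<in> Tbox \<longrightarrow> f p = g p)"

definition ebas :: "zvec \<Rightarrow> rvec \<Rightarrow> complex" where
  "ebas x p = cis (zdot p x)"

definition projT :: "zvec \<Rightarrow> (rvec \<Rightarrow> complex) \<Rightarrow> rvec \<Rightarrow> complex" where
  "projT x \<phi> p = innerT (ebas x) \<phi> * ebas x p"

definition bfun :: "real \<Rightarrow> real \<Rightarrow> rvec \<Rightarrow> real" where
  "bfun hb \<epsilon> k = hb * \<epsilon> * (2 - cos2 k)"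

definition ffun :: "real \<Rightarrow> rvec \<Rightarrow> rvec \<Rightarrow> real" where
  "ffun \<epsilon> k p = \<epsilon> * (4 - cos2 (p + k) - cos2 p)"

definition dfun :: "(zvec \<Rightarrow> real) \<Rightarrow> (zvec \<Rightarrow> real) \<Rightarrow> rvec \<Rightarrow> rvec \<Rightarrow> complex" where
  "dfun p1 p2 k p = fhat p1 (k + p) + fhat p2 ((1/2) *\<^sub>R k + p)"

definition A11 :: "real \<Rightarrow> (zvec \<Rightarrow> real) \<Rightarrow> real \<Rightarrow> rvec
                    \<Rightarrow> (rvec \<Rightarrow> complex) \<Rightarrow> rvec \<Rightarrow> complex" where
  "A11 \<epsilon> u U k \<phi> p =
     complex_of_real (ffun \<epsilon> k p) * \<phi> p
     + (\<Sum>\<^sub>\<infinity>x. complex_of_real (u x) * projT x \<phi> p)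
     + complex_of_real U * projT (0,0) \<phi> p"

definition Afull :: "real \<Rightarrow> real \<Rightarrow> (zvec \<Rightarrow> real) \<Rightarrow> (zvec \<Rightarrow> real) \<Rightarrow> (zvec \<Rightarrow> real)
      \<Rightarrow> (zvec \<Rightarrow> real) \<Rightarrow> real \<Rightarrow> rvec
      \<Rightarrow> (rvec \<Rightarrow> complex) \<times> complex \<Rightarrow> (rvec \<Rightarrow> complex) \<times> complex" where
  "Afull \<epsilon> hb u \<upsilon> p1 p2 U k v =
     ((\<lambda>p. A11 \<epsilon> u U k (fst v) p + fhat \<upsilon> k * snd v * dfun p1 p2 k p),
      fhat \<upsilon> k * innerT (dfun p1 p2 k) (fst v) + complex_of_real (bfun hb \<epsilon> k) * snd v)"

text \<open>Resolvent set of A_{1,1}(U,k): A_{1,1} - lambda is a bijection of L^2(T^2)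
  with bounded inverse.\<close>
definition in_resolvent_A11 :: "real \<Rightarrow> (zvec \<Rightarrow> real) \<Rightarrow> real \<Rightarrow> rvec \<Rightarrow> complex \<Rightarrow> bool" where
  "in_resolvent_A11 \<epsilon> u U k lam \<longleftrightarrow>
     (\<forall>g. L2T g \<longrightarrow> (\<exists>\<phi>. L2T \<phi> \<and> eqT (\<lambda>p. A11 \<epsilon> u U k \<phi> p - lam * \<phi> p) g)) \<and>
     (\<exists>C. \<forall>\<phi>. L2T \<phi> \<longrightarrow> normsqT \<phi> \<le> C * normsqT (\<lambda>p. A11 \<epsilon> u U k \<phi> p - lam * \<phi> p))"

definition is_eigvec_A :: "real \<Rightarrow> real \<Rightarrow> (zvec \<Rightarrow> real) \<Rightarrow> (zvec \<Rightarrow> real) \<Rightarrow> (zvec \<Rightarrow> real)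
      \<Rightarrow> (zvec \<Rightarrow> real) \<Rightarrow> real \<Rightarrow> rvec \<Rightarrow> complex
      \<Rightarrow> (rvec \<Rightarrow> complex) \<times> complex \<Rightarrow> bool" where
  "is_eigvec_A \<epsilon> hb u \<upsilon> p1 p2 U k lam v \<longleftrightarrow>
     L2T (fst v) \<and>
     eqT (fst (Afull \<epsilon> hb u \<upsilon> p1 p2 U k v)) (\<lambda>p. lam * fst v p) \<and>
     snd (Afull \<epsilon> hb u \<upsilon> p1 p2 U k v) = lam * snd v"

definition is_eigenvalue_A :: "real \<Rightarrow> real \<Rightarrow> (zvec \<Rightarrow> real) \<Rightarrow> (zvec \<Rightarrow> real) \<Rightarrow> (zvec \<Rightarrow> real)
      \<Rightarrow> (zvec \<Rightarrow> real) \<Rightarrow> real \<Rightarrow> rvec \<Rightarrow> complex \<Rightarrow> bool" where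
  "is_eigenvalue_A \<epsilon> hb u \<upsilon> p1 p2 U k lam \<longleftrightarrow>
     (\<exists>v. is_eigvec_A \<epsilon> hb u \<upsilon> p1 p2 U k lam v \<and> \<not> (eqT (fst v) (\<lambda>_. 0) \<and> snd v = 0))"

end

theory Submission
  imports Defs
begin

(* If (\<phi>, z) is an eigenvector, then w = \<phi> + hat \<upsilon>(k) z \<psi> satisfies (A_{1,1} - \<lambda>) w = 0,
   because \<psi> solves (A_{1,1} - \<lambda>) \<psi> = d(k); as \<lambda> lies in the resolvent set, w = 0.
   So \<phi> = -z hat \<upsilon>(k) \<psi>: an eigenvector is determined by its second component, which
   therefore cannot vanish, and rescaling one eigenvector yields (c hat \<upsilon>(k) \<psi>, -c) for every c. *)

lemma borel_measurable_cnj [measurable (raw)]: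
  "f \<in> borel_measurable M \<Longrightarrow> (\<lambda>x. cnj (f x)) \<in> borel_measurable M"
  using measurable_compose borel_measurable_continuous_onI continuous_on_cnj continuous_on_id
  by blast

lemma sets_lborel_Tbox [measurable]: "Tbox \<in> sets lborel"
  unfolding Tbox_def by (simp add: borel_prod[symmetric])

lemma emeasure_Tbox_finite: "emeasure lborel Tbox < \<infinity>"
  unfolding Tbox_def by (intro emeasure_bounded_finite bounded_Times) auto

lemma set_integrable_Tbox_dominated:
  fixes h :: "rvec \<Rightarrow> 'b::{banach,second_countable_topology}"
  assumes "set_integrable lborel Tbox g" "h \<in> borel_measurable lborel"
    and "\<And>p. norm (h p) \<le> g p"
  shows "set_integrable lborel Tbox h"
  using assms(2,3)
  by (intro set_integrable_bound[OF assms(1)])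
     (auto simp: set_borel_measurable_def intro!: always_eventually order_trans[OF _ abs_ge_self])

lemma L2T_measurable: "L2T \<phi> \<Longrightarrow> \<phi> \<in> borel_measurable lborel"
  unfolding L2T_def by blast

lemma L2T_set_integrable:
  assumes "L2T \<phi>" shows "set_integrable lborel Tbox \<phi>"
proof (rule set_integrable_Tbox_dominated)
  have "set_integrable lborel Tbox (\<lambda>p. 1::real)"
    using emeasure_Tbox_finite sets_lborel_Tbox by (simp add: set_integrable_def)
  then show "set_integrable lborel Tbox (\<lambda>p. 1 + (cmod (\<phi> p))\<^sup>2)"
    using assms unfolding L2T_def by (intro set_integral_add) auto
  show "cmod (\<phi> p) \<le> 1 + (cmod (\<phi> p))\<^sup>2" for p
    using zero_le_power2[of "cmod (\<phi> p) - 1/2"] by (simp add: power2_eq_square algebra_simps)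
qed (use assms in \<open>rule L2T_measurable\<close>)

lemma L2T_scale: "L2T \<phi> \<Longrightarrow> L2T (\<lambda>p. a * \<phi> p)"
  unfolding L2T_def by (auto simp: norm_mult power_mult_distrib)

lemma L2T_add:
  assumes "L2T \<phi>" "L2T \<psi>" shows "L2T (\<lambda>p. \<phi> p + \<psi> p)"
proof -
  have sum_meas: "(\<lambda>p. \<phi> p + \<psi> p) \<in> borel_measurable lborel"
    using L2T_measurable[OF assms(1)] L2T_measurable[OF assms(2)] by measurable
  have "set_integrable lborel Tbox (\<lambda>p. (cmod (\<phi> p + \<psi> p))\<^sup>2)"
  proof (rule set_integrable_Tbox_dominated)
    show "set_integrable lborel Tbox (\<lambda>p. 2 * (cmod (\<phi> p))\<^sup>2 + 2 * (cmod (\<psi> p))\<^sup>2)"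
      using assms unfolding L2T_def by (intro set_integral_add set_integrable_mult_right) auto
    show "(\<lambda>p. (cmod (\<phi> p + \<psi> p))\<^sup>2) \<in> borel_measurable lborel"
      using sum_meas by measurable
    show "norm ((cmod (\<phi> p + \<psi> p))\<^sup>2) \<le> 2 * (cmod (\<phi> p))\<^sup>2 + 2 * (cmod (\<psi> p))\<^sup>2" for p
    proof -
      have "(cmod (\<phi> p + \<psi> p))\<^sup>2 \<le> (cmod (\<phi> p) + cmod (\<psi> p))\<^sup>2"
        by (simp add: norm_triangle_ineq power_mono)
      also have "\<dots> \<le> 2 * (cmod (\<phi> p))\<^sup>2 + 2 * (cmod (\<psi> p))\<^sup>2"
        using zero_le_power2[of "cmod (\<phi> p) - cmod (\<psi> p)"]
        by (simp add: power2_eq_square algebra_simps)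
      finally show ?thesis by simp
    qed
  qed
  with sum_meas show ?thesis
    unfolding L2T_def by blast
qed

lemma innerT_scale: "innerT f (\<lambda>p. a * g p) = a * innerT f g"
  unfolding innerT_def by (simp add: mult.left_commute)

lemma innerT_add:
  assumes "set_integrable lborel Tbox (\<lambda>p. cnj (f p) * g p)"
    and "set_integrable lborel Tbox (\<lambda>p. cnj (f p) * h p)"
  shows "innerT f (\<lambda>p. g p + h p) = innerT f g + innerT f h"
  unfolding innerT_def using set_integral_add(2)[OF assms] by (simp add: distrib_left)

lemma innerT_cong_eqT:
  assumes "f \<in> borel_measurable lborel" "g \<in> borel_measurable lborel" "h \<in> borel_measurable lborel"
    and "eqT g h"
  shows "innerT f g = innerT f h"
proof -
  have "(LINT p:Tbox|lborel. cnj (f p) * g p) = (LINT p:Tbox|lborel. cnj (f p) * h p)"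
    by (rule set_lebesgue_integral_cong_AE)
       (use assms sets_lborel_Tbox in \<open>auto simp: eqT_def elim!: eventually_mono\<close>)
  then show ?thesis unfolding innerT_def by simp
qed

lemma normsqT_eqT_zero:
  assumes "eqT w (\<lambda>_. 0)" shows "normsqT w = 0"
proof -
  have "AE p in lborel. indicator Tbox p *\<^sub>R (cmod (w p))\<^sup>2 = 0"
    using assms unfolding eqT_def by eventually_elim (simp add: indicator_def)
  then show ?thesis
    unfolding normsqT_def set_lebesgue_integral_def by (simp add: integral_eq_zero_AE)
qed

lemma eqT_zero_if_normsqT_nonpos:
  assumes "L2T w" "normsqT w \<le> 0" shows "eqT w (\<lambda>_. 0)"
proof -
  define f where "f = (\<lambda>p. indicator Tbox p *\<^sub>R (cmod (w p))\<^sup>2 :: real)"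
  have f_int: "integrable lborel f"
    using assms(1) unfolding L2T_def set_integrable_def f_def by blast
  have f_nonneg: "\<And>p. 0 \<le> f p"
    unfolding f_def by (simp add: indicator_def)
  have "integral\<^sup>L lborel f / (4 * pi\<^sup>2) \<le> 0"
    using assms(2) unfolding normsqT_def set_lebesgue_integral_def f_def by simp
  then have "integral\<^sup>L lborel f \<le> 0"
    by (simp add: divide_le_0_iff)
  moreover have "0 \<le> integral\<^sup>L lborel f"
    by (rule integral_nonneg_AE) (simp add: f_nonneg)
  ultimately have "integral\<^sup>L lborel f = 0"
    by (rule antisym)
  then have "AE p in lborel. f p = 0"
    using integral_nonneg_eq_0_iff_AE[OF f_int] f_nonneg by simp
  then show ?thesis
    unfolding eqT_def by eventually_elim (auto simp: f_def)
qed

lemma ebas_measurable: "ebas x \<in> borel_measurable lborel"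
  unfolding measurable_lborel2 ebas_def[abs_def] zdot_def
  by (intro borel_measurable_continuous_onI continuous_intros)

lemma norm_ebas [simp]: "cmod (ebas x p) = 1"
  unfolding ebas_def by simp

lemma set_integrable_ebas_L2T:
  assumes "L2T \<phi>" shows "set_integrable lborel Tbox (\<lambda>p. cnj (ebas x p) * \<phi> p)"
proof (rule set_integrable_Tbox_dominated)
  show "set_integrable lborel Tbox (\<lambda>p. cmod (\<phi> p))"
    using L2T_set_integrable[OF assms] by (rule set_integrable_norm)
  show "(\<lambda>p. cnj (ebas x p) * \<phi> p) \<in> borel_measurable lborel"
    using ebas_measurable L2T_measurable[OF assms] by measurable
  show "norm (cnj (ebas x p) * \<phi> p) \<le> cmod (\<phi> p)" for p
    by (simp add: norm_mult)
qed

lemma norm_innerT_ebas_le: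
  assumes "L2T \<phi>"
  shows "cmod (innerT (ebas x) \<phi>) \<le> (LINT p:Tbox|lborel. cmod (\<phi> p)) / (4 * pi\<^sup>2)"
proof -
  have "cmod (LINT p:Tbox|lborel. cnj (ebas x p) * \<phi> p) \<le> (LINT p:Tbox|lborel. cmod (\<phi> p))"
    using set_integral_norm_bound[OF set_integrable_ebas_L2T[OF assms]] by (simp add: norm_mult)
  then show ?thesis
    unfolding innerT_def norm_mult norm_of_real by (simp add: divide_right_mono)
qed

lemma projT_scale: "projT x (\<lambda>p. a * \<phi> p) p = a * projT x \<phi> p"
  unfolding projT_def innerT_scale by simp

lemma projT_add:
  assumes "L2T \<phi>" "L2T \<psi>"
  shows "projT x (\<lambda>p. \<phi> p + \<psi> p) p = projT x \<phi> p + projT x \<psi> p"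
  unfolding projT_def
  by (simp add: innerT_add set_integrable_ebas_L2T assms distrib_right)

lemma abs_summable_on_projT:
  assumes "L2T \<phi>" "(\<lambda>x. \<bar>u x\<bar>) summable_on UNIV"
  shows "(\<lambda>x. norm (complex_of_real (u x) * projT x \<phi> p)) summable_on UNIV"
proof (rule Infinite_Sum.abs_summable_on_comparison_test')
  define B where "B = (LINT p:Tbox|lborel. cmod (\<phi> p)) / (4 * pi\<^sup>2)"
  show "(\<lambda>x. \<bar>u x\<bar> * B) summable_on UNIV"
    using assms(2) by (rule summable_on_cmult_left)
  show "norm (complex_of_real (u x) * projT x \<phi> p) \<le> \<bar>u x\<bar> * B" for x
    unfolding projT_def B_def
    using mult_left_mono[OF norm_innerT_ebas_le[OF assms(1), of x] abs_ge_zero[of "u x"]]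
    by (simp add: norm_mult)
qed

lemma A11_scale: "A11 \<epsilon> u U k (\<lambda>p. a * \<phi> p) p = a * A11 \<epsilon> u U k \<phi> p"
  unfolding A11_def projT_scale mult.left_commute[of _ a] infsum_cmult_right'
  by (simp add: distrib_left)

lemma A11_add:
  assumes "L2T \<phi>" "L2T \<psi>" "(\<lambda>x. \<bar>u x\<bar>) summable_on UNIV"
  shows "A11 \<epsilon> u U k (\<lambda>p. \<phi> p + \<psi> p) p = A11 \<epsilon> u U k \<phi> p + A11 \<epsilon> u U k \<psi> p"
proof -
  have "(\<lambda>x. complex_of_real (u x) * projT x \<phi> p) summable_on UNIV"
    and "(\<lambda>x. complex_of_real (u x) * projT x \<psi> p) summable_on UNIV"
    using abs_summable_on_projT[OF assms(1,3)] abs_summable_on_projT[OF assms(2,3)]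
    by (simp_all add: abs_summable_summable)
  then have "(\<Sum>\<^sub>\<infinity>x. complex_of_real (u x) * projT x (\<lambda>p. \<phi> p + \<psi> p) p)
      = (\<Sum>\<^sub>\<infinity>x. complex_of_real (u x) * projT x \<phi> p) + (\<Sum>\<^sub>\<infinity>x. complex_of_real (u x) * projT x \<psi> p)"
    unfolding projT_add[OF assms(1,2)] distrib_left by (rule infsum_add)
  then show ?thesis
    unfolding A11_def projT_add[OF assms(1,2)] by (simp add: algebra_simps)
qed

lemma A11_cong_eqT:
  assumes "\<phi> \<in> borel_measurable lborel" "\<psi> \<in> borel_measurable lborel" "eqT \<phi> \<psi>"
  shows "eqT (A11 \<epsilon> u U k \<phi>) (A11 \<epsilon> u U k \<psi>)"
proof -
  have projT_eq: "projT x \<phi> = projT x \<psi>" for x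
    unfolding projT_def using innerT_cong_eqT[OF ebas_measurable assms] by simp
  show ?thesis
    using assms(3) unfolding eqT_def A11_def by eventually_elim (simp add: projT_eq)
qed

lemma in_resolvent_A11_kernel_zero:
  assumes "in_resolvent_A11 \<epsilon> u U k lam" "L2T w"
    and "eqT (\<lambda>p. A11 \<epsilon> u U k w p - lam * w p) (\<lambda>_. 0)"
  shows "eqT w (\<lambda>_. 0)"
proof (rule eqT_zero_if_normsqT_nonpos[OF assms(2)])
  obtain C where "normsqT w \<le> C * normsqT (\<lambda>p. A11 \<epsilon> u U k w p - lam * w p)"
    using assms(1,2) unfolding in_resolvent_A11_def by blast
  then show "normsqT w \<le> 0"
    using normsqT_eqT_zero[OF assms(3)] by simp
qed

lemma fhat_continuous:
  assumes "(\<lambda>x. \<bar>f x\<bar>) summable_on UNIV"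
  shows "continuous_on UNIV (fhat f)"
proof -
  have "uniform_limit UNIV (\<lambda>X y. \<Sum>x\<in>X. cis (zdot y x) * complex_of_real (f x)) (fhat f)
          (finite_subsets_at_top UNIV)"
    unfolding fhat_def
    by (rule Weierstrass_m_test_general[where M="\<lambda>x. \<bar>f x\<bar>"]) (auto simp: norm_mult assms)
  then show ?thesis
    by (rule uniform_limit_theorem[rotated])
       (auto intro!: always_eventually continuous_intros simp: zdot_def)
qed

lemma dfun_measurable:
  assumes "(\<lambda>x. \<bar>p1 x\<bar>) summable_on UNIV" "(\<lambda>x. \<bar>p2 x\<bar>) summable_on UNIV"
  shows "dfun p1 p2 k \<in> borel_measurable lborel"
proof -
  have "continuous_on UNIV (\<lambda>p. fhat p1 (k + p) + fhat p2 ((1/2) *\<^sub>R k + p))"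
    by (intro continuous_on_add continuous_intros
          continuous_on_compose2[OF fhat_continuous[OF assms(1)]]
          continuous_on_compose2[OF fhat_continuous[OF assms(2)]]) auto
  then show ?thesis
    unfolding measurable_lborel2 dfun_def[abs_def] by (rule borel_measurable_continuous_onI)
qed

lemma abs_summable_if_exp_weighted:
  assumes "\<alpha> \<ge> 0" "(\<lambda>z. exp (\<alpha> * znorm z) * \<bar>f z\<bar>) summable_on UNIV"
  shows "(\<lambda>z. \<bar>f z\<bar>) summable_on UNIV"
proof (rule summable_on_comparison_test[OF assms(2)])
  show "\<bar>f z\<bar> \<le> exp (\<alpha> * znorm z) * \<bar>f z\<bar>" for z
  proof -
    have "0 \<le> \<alpha> * znorm z"
      using assms(1) unfolding znorm_def by simp
    then have "1 \<le> exp (\<alpha> * znorm z)" by simp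
    then show ?thesis by (simp add: mult_le_cancel_right1)
  qed
qed simp

lemma is_eigvec_A_scale:
  assumes "is_eigvec_A \<epsilon> hb u \<upsilon> p1 p2 U k lam (\<phi>, z)"
  shows "is_eigvec_A \<epsilon> hb u \<upsilon> p1 p2 U k lam (\<lambda>p. a * \<phi> p, a * z)"
proof -
  let ?b = "complex_of_real (bfun hb \<epsilon> k)" and ?d = "dfun p1 p2 k"
  have L2T_\<phi>: "L2T \<phi>"
    and fst_eq: "eqT (\<lambda>p. A11 \<epsilon> u U k \<phi> p + fhat \<upsilon> k * z * ?d p) (\<lambda>p. lam * \<phi> p)"
    and snd_eq: "fhat \<upsilon> k * innerT ?d \<phi> + ?b * z = lam * z"
    using assms unfolding is_eigvec_A_def Afull_def by simp_all
  have scale_fst: "A11 \<epsilon> u U k (\<lambda>p. a * \<phi> p) p + fhat \<upsilon> k * (a * z) * ?d p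
      = a * (A11 \<epsilon> u U k \<phi> p + fhat \<upsilon> k * z * ?d p)" for p
    by (simp add: A11_scale algebra_simps)
  have "eqT (\<lambda>p. A11 \<epsilon> u U k (\<lambda>p. a * \<phi> p) p + fhat \<upsilon> k * (a * z) * ?d p)
      (\<lambda>p. lam * (a * \<phi> p))"
    using fst_eq unfolding eqT_def scale_fst by eventually_elim (simp add: mult.left_commute)
  moreover have "fhat \<upsilon> k * innerT ?d (\<lambda>p. a * \<phi> p) + ?b * (a * z) = lam * (a * z)"
    using snd_eq unfolding innerT_scale by (metis distrib_left mult.left_commute)
  ultimately show ?thesis
    using L2T_scale[OF L2T_\<phi>] unfolding is_eigvec_A_def Afull_def by simp
qed

lemma is_eigvec_A_cong_eqT:
  assumes "is_eigvec_A \<epsilon> hb u \<upsilon> p1 p2 U k lam (\<phi>, z)" "L2T \<phi>'" "eqT \<phi> \<phi>'"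
    and "dfun p1 p2 k \<in> borel_measurable lborel"
  shows "is_eigvec_A \<epsilon> hb u \<upsilon> p1 p2 U k lam (\<phi>', z)"
proof -
  have L2T_\<phi>: "L2T \<phi>"
    and fst_eq: "eqT (\<lambda>p. A11 \<epsilon> u U k \<phi> p + fhat \<upsilon> k * z * dfun p1 p2 k p) (\<lambda>p. lam * \<phi> p)"
    using assms(1) unfolding is_eigvec_A_def Afull_def by simp_all
  have "eqT (A11 \<epsilon> u U k \<phi>) (A11 \<epsilon> u U k \<phi>')"
    using L2T_measurable[OF L2T_\<phi>] L2T_measurable[OF assms(2)] assms(3) by (rule A11_cong_eqT)
  with fst_eq assms(3)
  have "eqT (\<lambda>p. A11 \<epsilon> u U k \<phi>' p + fhat \<upsilon> k * z * dfun p1 p2 k p) (\<lambda>p. lam * \<phi>' p)"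
    unfolding eqT_def by eventually_elim auto
  moreover have "innerT (dfun p1 p2 k) \<phi> = innerT (dfun p1 p2 k) \<phi>'"
    using assms(4) L2T_measurable[OF L2T_\<phi>] L2T_measurable[OF assms(2)] assms(3)
    by (rule innerT_cong_eqT)
  ultimately show ?thesis
    using assms(1,2) unfolding is_eigvec_A_def Afull_def by simp
qed

lemma is_eigvec_A_fst_eqT:
  assumes "(\<lambda>x. \<bar>u x\<bar>) summable_on UNIV" "in_resolvent_A11 \<epsilon> u U k lam"
    and "L2T \<psi>" "eqT (\<lambda>p. A11 \<epsilon> u U k \<psi> p - lam * \<psi> p) (dfun p1 p2 k)"
    and "is_eigvec_A \<epsilon> hb u \<upsilon> p1 p2 U k lam (\<phi>, z)"
  shows "eqT \<phi> (\<lambda>p. - z * (fhat \<upsilon> k * \<psi> p))"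
proof -
  define a where "a = fhat \<upsilon> k * z"
  define w where "w p = \<phi> p + a * \<psi> p" for p
  have L2T_\<phi>: "L2T \<phi>" using assms(5) unfolding is_eigvec_A_def by simp
  have L2T_w: "L2T w"
    unfolding w_def by (intro L2T_add L2T_scale L2T_\<phi> assms(3))
  have w_eq: "A11 \<epsilon> u U k w p - lam * w p
      = (A11 \<epsilon> u U k \<phi> p - lam * \<phi> p) + a * (A11 \<epsilon> u U k \<psi> p - lam * \<psi> p)" for p
    unfolding w_def A11_add[OF L2T_\<phi> L2T_scale[OF assms(3)] assms(1)] A11_scale
    by (simp add: algebra_simps)
  have "eqT (\<lambda>p. A11 \<epsilon> u U k \<phi> p + a * dfun p1 p2 k p) (\<lambda>p. lam * \<phi> p)"
    using assms(5) unfolding is_eigvec_A_def Afull_def a_def by simp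
  then have "eqT (\<lambda>p. A11 \<epsilon> u U k w p - lam * w p) (\<lambda>_. 0)"
    using assms(4) unfolding eqT_def by eventually_elim (simp add: w_eq algebra_simps)
  then have "eqT w (\<lambda>_. 0)"
    by (rule in_resolvent_A11_kernel_zero[OF assms(2) L2T_w])
  then show ?thesis
    unfolding eqT_def w_def a_def by (auto elim!: eventually_mono simp: add_eq_0_iff2)
qed

lemma is_eigvec_A_multiple:
  assumes "is_eigvec_A \<epsilon> hb u \<upsilon> p1 p2 U k lam (\<phi>0, z0)" "z0 \<noteq> 0"
    and "eqT \<phi>0 (\<lambda>p. - z0 * g p)" "L2T \<phi>" "eqT \<phi> (\<lambda>p. c * g p)"
    and "dfun p1 p2 k \<in> borel_measurable lborel"
  shows "is_eigvec_A \<epsilon> hb u \<upsilon> p1 p2 U k lam (\<phi>, - c)"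
proof -
  define a where "a = - c / z0"
  have "is_eigvec_A \<epsilon> hb u \<upsilon> p1 p2 U k lam (\<lambda>p. a * \<phi>0 p, - c)"
    using is_eigvec_A_scale[OF assms(1), of a] assms(2) unfolding a_def by simp
  moreover have "eqT (\<lambda>p. a * \<phi>0 p) \<phi>"
    using assms(3,5) unfolding eqT_def a_def by eventually_elim (use assms(2) in auto)
  ultimately show ?thesis
    by (rule is_eigvec_A_cong_eqT[OF _ assms(4) _ assms(6)])
qed

theorem corollary4p6:
  fixes \<epsilon> hb U :: real and u \<upsilon> p1 p2 :: "zvec \<Rightarrow> real"
    and k :: rvec and lam :: complex and \<psi> :: "rvec \<Rightarrow> complex"
  assumes eps: "\<epsilon> \<ge> 0" and hb: "0 \<le> hb" "hb \<le> 1/2" and U: "U \<ge> 0"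
    and u_nonneg: "\<forall>x. u x \<ge> 0"
    and rot: "rot_inv u" "rot_inv \<upsilon>" "rot_inv p1" "rot_inv p2"
    and u_sum: "(\<lambda>x. \<bar>u x\<bar>) summable_on UNIV"
    and v_sum: "(\<lambda>x. \<bar>\<upsilon> x\<bar>) summable_on UNIV"
    and p_exp: "\<exists>\<alpha>0>0. (\<lambda>z. exp (\<alpha>0 * znorm z) * \<bar>p1 z\<bar>) summable_on UNIV \<and>
                        (\<lambda>z. exp (\<alpha>0 * znorm z) * \<bar>p2 z\<bar>) summable_on UNIV"
    and p2_supp: "\<forall>z. \<not> (even (fst z) \<and> even (snd z)) \<longrightarrow> p2 z = 0"
    and p_nz: "\<exists>x. p1 x + p2 x \<noteq> 0"
    and p_cond: "\<forall>q\<in>Tbox. \<exists>x. complex_of_real (p2 x) \<noteq>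
                    - cis (zdot q x / 2) * complex_of_real (p1 x)"
    and k: "k \<in> Tbox"
    and res: "in_resolvent_A11 \<epsilon> u U k lam"
    and eig: "is_eigenvalue_A \<epsilon> hb u \<upsilon> p1 p2 U k lam"
    and psi: "L2T \<psi>" "eqT (\<lambda>p. A11 \<epsilon> u U k \<psi> p - lam * \<psi> p) (dfun p1 p2 k)"
  shows "\<forall>\<phi> z. is_eigvec_A \<epsilon> hb u \<upsilon> p1 p2 U k lam (\<phi>, z) \<longleftrightarrow>
            L2T \<phi> \<and> (\<exists>c::complex. eqT \<phi> (\<lambda>p. c * (fhat \<upsilon> k * \<psi> p)) \<and> z = c * (-1))"
proof -
  obtain \<alpha> where "\<alpha> > 0"
    and "(\<lambda>z. exp (\<alpha> * znorm z) * \<bar>p1 z\<bar>) summable_on UNIV"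
    and "(\<lambda>z. exp (\<alpha> * znorm z) * \<bar>p2 z\<bar>) summable_on UNIV"
    using p_exp by blast
  then have dfun_meas: "dfun p1 p2 k \<in> borel_measurable lborel"
    by (intro dfun_measurable abs_summable_if_exp_weighted[of \<alpha>]) auto
  note fst_eqT = is_eigvec_A_fst_eqT[OF u_sum res psi]
  obtain \<phi>0 z0 where eigvec0: "is_eigvec_A \<epsilon> hb u \<upsilon> p1 p2 U k lam (\<phi>0, z0)"
    and nonzero0: "\<not> (eqT \<phi>0 (\<lambda>_. 0) \<and> z0 = 0)"
    using eig unfolding is_eigenvalue_A_def by auto
  have "z0 \<noteq> 0"
    using fst_eqT[OF eigvec0] nonzero0 unfolding eqT_def by auto
  show ?thesis
  proof (intro allI iffI)
    fix \<phi> z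
    assume "is_eigvec_A \<epsilon> hb u \<upsilon> p1 p2 U k lam (\<phi>, z)"
    then show "L2T \<phi> \<and> (\<exists>c. eqT \<phi> (\<lambda>p. c * (fhat \<upsilon> k * \<psi> p)) \<and> z = c * -1)"
      using fst_eqT unfolding is_eigvec_A_def by (intro conjI exI[of _ "- z"]) auto
  next
    fix \<phi> z
    assume "L2T \<phi> \<and> (\<exists>c. eqT \<phi> (\<lambda>p. c * (fhat \<upsilon> k * \<psi> p)) \<and> z = c * -1)"
    then show "is_eigvec_A \<epsilon> hb u \<upsilon> p1 p2 U k lam (\<phi>, z)"
      using is_eigvec_A_multiple[OF eigvec0 \<open>z0 \<noteq> 0\<close> fst_eqT[OF eigvec0] _ _ dfun_meas] by auto
  qed
qed

end
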